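(* Let $\Xi=\langle\Sigma,\mathcal{A}\rangle$ be a planning domain in which every action has cost $1$, $\mathcal{I}\subseteq\Sigma$ an initial state, $\mathcal{G}$ a finite set of candidate goals containing the actual goal $G^*$, and $O=\langle o_1,\dots,o_n\rangle$, $n\ge 1$, the complete (100\%) sequence of observations, i.e. $O$ is itself a plan that leads from $\mathcal{I}$ to a state satisfying $G^*$. For each $G\in\mathcal{G}$, let $C^G$ be a set of operator-counting constraints for $\mathcal{I}$ with respect to the planning instance $\langle\Xi,\mathcal{I},G\rangle$, let $k_a$ be the number of occurrences of action $a$ in $O$, and let $h_{hc}^G$ be the optimal value (or $\infty$ if infeasible) of the linear program: minimize $\sum_{a\in\mathcal{A}}\mathsf{Y}_a$ subject to $C^G$, $\mathsf{Y}_a\ge 0$ and $\mathsf{Y}_a\ge k_a$ for all $a\in\mathcal{A}$. Let $m=\min_{G\in\mathcal{G}}h_{hc}^G$, $U=1+\frac{m-|O|}{m}$, and let the returned set be $R=\{G\in\mathcal{G} : h_{hc}^G\le m\cdot U\}$. Then $G^*\in R$.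
   Context: An $s$-plan for an instance $\langle\Xi,\mathcal{I},G\rangle$ is a valid action sequence from state $s$ to a state satisfying $G$; for such a plan $\pi$, $\mathsf{Y}^\pi_a$ is the number of occurrences of $a$ in $\pi$. Given non-negative variables including $\mathsf{Y}_a$ for each $a\in\mathcal{A}$ (plus possibly auxiliary variables), a set of linear inequalities is an operator-counting constraint for $s$ if for every $s$-plan $\pi$ there is a feasible solution with $\mathsf{Y}_a=\mathsf{Y}^\pi_a$ for all $a$. The set $R$ is the output of the paper's goal recognition procedure using the hard-constrained heuristic $h_{hc}$ and the uncertainty ratio $U$. *)

theory Defs
  imports Complex_Main "HOL-Library.Extended_Real"
begin

record ('p, 'a) domain =
  props :: "'p set"
  acts  :: "'a set"
  pre   :: "'a \<Rightarrow> 'p set"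
  add   :: "'a \<Rightarrow> 'p set"
  del   :: "'a \<Rightarrow> 'p set"

definition wf_domain :: "('p, 'a) domain \<Rightarrow> bool" where
  "wf_domain D \<longleftrightarrow> finite (props D) \<and> finite (acts D) \<and>
     (\<forall>a\<in>acts D. pre D a \<subseteq> props D \<and> add D a \<subseteq> props D \<and> del D a \<subseteq> props D)"

fun exec :: "('p, 'a) domain \<Rightarrow> 'p set \<Rightarrow> 'a list \<Rightarrow> 'p set option" where
  "exec D s [] = Some s"
| "exec D s (a # \<pi>) =
     (if a \<in> acts D \<and> pre D a \<subseteq> s then exec D ((s - del D a) \<union> add D a) \<pi> else None)"

definition is_plan :: "('p, 'a) domain \<Rightarrow> 'p set \<Rightarrow> 'p set \<Rightarrow> 'a list \<Rightarrow> bool" where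
  "is_plan D s G \<pi> \<longleftrightarrow> (\<exists>s'. exec D s \<pi> = Some s' \<and> G \<subseteq> s')"

datatype ('a, 'x) ocvar = Yv 'a | Aux 'x

text \<open>A linear inequality (c, b) stands for  sum_v c v * x v >= b  (c of finite support).\<close>
type_synonym ('a, 'x) lin_ineq = "(('a, 'x) ocvar \<Rightarrow> real) \<times> real"

definition supp_coeffs :: "('a, 'x) lin_ineq \<Rightarrow> ('a, 'x) ocvar set" where
  "supp_coeffs c = {v. fst c v \<noteq> 0}"

definition wf_constraints :: "('a, 'x) lin_ineq set \<Rightarrow> bool" where
  "wf_constraints C \<longleftrightarrow> finite C \<and> (\<forall>c\<in>C. finite (supp_coeffs c))"

definition sat_ineq :: "(('a, 'x) ocvar \<Rightarrow> real) \<Rightarrow> ('a, 'x) lin_ineq \<Rightarrow> bool" where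
  "sat_ineq x c \<longleftrightarrow> (\<Sum>v\<in>supp_coeffs c. fst c v * x v) \<ge> snd c"

definition feasible :: "(('a, 'x) ocvar \<Rightarrow> real) \<Rightarrow> ('a, 'x) lin_ineq set \<Rightarrow> bool" where
  "feasible x C \<longleftrightarrow> (\<forall>v. x v \<ge> 0) \<and> (\<forall>c\<in>C. sat_ineq x c)"

definition operator_counting ::
  "('p, 'a) domain \<Rightarrow> 'p set \<Rightarrow> 'p set \<Rightarrow> ('a, 'x) lin_ineq set \<Rightarrow> bool" where
  "operator_counting D s G C \<longleftrightarrow> wf_constraints C \<and>
     (\<forall>\<pi>. is_plan D s G \<pi> \<longrightarrow>
        (\<exists>x. feasible x C \<and> (\<forall>a\<in>acts D. x (Yv a) = real (count_list \<pi> a))))"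

text \<open>Optimal value (infimum; \<infinity> if infeasible) of
  min sum_{a} Y_a  s.t. C, Y >= 0, Y_a >= k_a where k_a = occurrences of a in obs.\<close>
definition h_hc :: "('p, 'a) domain \<Rightarrow> ('a, 'x) lin_ineq set \<Rightarrow> 'a list \<Rightarrow> ereal" where
  "h_hc D C obs = Inf {ereal (\<Sum>a\<in>acts D. x (Yv a)) | x.
      feasible x C \<and> (\<forall>a\<in>acts D. x (Yv a) \<ge> real (count_list obs a))}"

definition recognized_goals ::
  "('p, 'a) domain \<Rightarrow> 'p set set \<Rightarrow> ('p set \<Rightarrow> ('a, 'x) lin_ineq set) \<Rightarrow> 'a list \<Rightarrow> 'p set set" where
  "recognized_goals D Gs C obs =
     (let m = Min ((\<lambda>G. h_hc D (C G) obs) ` Gs);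
          U = 1 + (m - ereal (real (length obs))) / m
      in {G \<in> Gs. h_hc D (C G) obs \<le> m * U})"

end

theory Submission
  imports Defs
begin

text \<open>Every operator-counting LP has optimal value at least the number of observations, since
  its counting variables dominate the observation counts. For the true goal the observation
  sequence is itself a plan, so its counts are a feasible solution of objective exactly the
  number of observations. Hence the true goal attains the minimum m = |O|, the uncertainty
  ratio U collapses to 1, and the true goal passes the threshold m \<cdot> U = m.\<close>

lemma exec_Some_imp_set_subset_acts: "exec D s \<pi> = Some s' \<Longrightarrow> set \<pi> \<subseteq> acts D"
  by (induction \<pi> arbitrary: s) (auto split: if_splits)

lemma is_plan_imp_set_subset_acts: "is_plan D s G \<pi> \<Longrightarrow> set \<pi> \<subseteq> acts D"
  unfolding is_plan_def using exec_Some_imp_set_subset_acts by blast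

lemma sum_count_list_eq_length:
  assumes "finite A" and "set xs \<subseteq> A"
  shows "(\<Sum>a\<in>A. real (count_list xs a)) = real (length xs)"
  using sum_count_set[OF assms(2,1)] by (metis of_nat_sum)

lemma length_le_h_hc:
  assumes "finite (acts D)" and "set obs \<subseteq> acts D"
  shows "ereal (real (length obs)) \<le> h_hc D C obs"
  unfolding h_hc_def
proof (rule Inf_greatest, clarify)
  fix x
  assume "\<forall>a\<in>acts D. real (count_list obs a) \<le> x (Yv a)"
  then have "(\<Sum>a\<in>acts D. real (count_list obs a)) \<le> (\<Sum>a\<in>acts D. x (Yv a))"
    by (intro sum_mono) auto
  then show "ereal (real (length obs)) \<le> ereal (\<Sum>a\<in>acts D. x (Yv a))"
    using sum_count_list_eq_length[OF assms] by simp
qed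

lemma h_hc_le_length_if_plan:
  assumes "finite (acts D)" and "operator_counting D s G C" and "is_plan D s G obs"
  shows "h_hc D C obs \<le> ereal (real (length obs))"
proof -
  obtain x where feas: "feasible x C" and counts: "\<forall>a\<in>acts D. x (Yv a) = real (count_list obs a)"
    using assms(2,3) unfolding operator_counting_def by blast
  have "h_hc D C obs \<le> ereal (\<Sum>a\<in>acts D. x (Yv a))"
    unfolding h_hc_def using feas counts by (intro Inf_lower) (auto intro!: exI[of _ x])
  also have "(\<Sum>a\<in>acts D. x (Yv a)) = real (length obs)"
    using counts sum_count_list_eq_length[OF assms(1) is_plan_imp_set_subset_acts[OF assms(3)]]
    by simp
  finally show ?thesis .
qed

lemma recognized_goals_if_h_hc_minimal:
  assumes "finite Gs" and "G \<in> Gs"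
    and lower: "\<forall>G'\<in>Gs. ereal (real (length obs)) \<le> h_hc D (C G') obs"
    and attained: "h_hc D (C G) obs = ereal (real (length obs))"
  shows "G \<in> recognized_goals D Gs C obs"
proof -
  define m where "m = Min ((\<lambda>G. h_hc D (C G) obs) ` Gs)"
  have "m = ereal (real (length obs))"
    unfolding m_def using assms by (intro antisym) (metis Min_le finite_imageI image_eqI,
      subst Min_ge_iff, auto)
  then have "m - ereal (real (length obs)) = 0" and "h_hc D (C G) obs \<le> m"
    using attained by simp_all
  then show ?thesis
    using \<open>G \<in> Gs\<close> unfolding recognized_goals_def Let_def m_def[symmetric] by simp
qed

theorem proposition2:
  fixes D :: "('p, 'a) domain"
    and I :: "'p set"
    and Gs :: "'p set set"
    and Gstar :: "'p set"
    and obs :: "'a list"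
    and C :: "'p set \<Rightarrow> ('a, 'x) lin_ineq set"
  assumes "wf_domain D"
    and "I \<subseteq> props D"
    and "finite Gs"
    and "\<forall>G\<in>Gs. G \<subseteq> props D"
    and "Gstar \<in> Gs"
    and "obs \<noteq> []"
    and "is_plan D I Gstar obs"
    and "\<forall>G\<in>Gs. operator_counting D I G (C G)"
  shows "Gstar \<in> recognized_goals D Gs C obs"
proof -
  have fin: "finite (acts D)" using assms(1) by (simp add: wf_domain_def)
  have lower: "\<forall>G\<in>Gs. ereal (real (length obs)) \<le> h_hc D (C G) obs"
    using length_le_h_hc[OF fin is_plan_imp_set_subset_acts[OF assms(7)]] by blast
  have "h_hc D (C Gstar) obs \<le> ereal (real (length obs))"
    using h_hc_le_length_if_plan[OF fin _ assms(7)] assms(5,8) by blast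
  then have "h_hc D (C Gstar) obs = ereal (real (length obs))"
    using lower assms(5) by (blast intro: antisym)
  then show ?thesis
    using recognized_goals_if_h_hc_minimal[OF assms(3,5) lower] by blast
qed

end
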